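(* Let $\mathcal S$ be the stabilizer group of an $n$-qubit stabilizer code ($-I\notin\mathcal S$), generated by independent commuting Pauli operators $S_1,\dots,S_r$, and for $x\in\mathbb F_2^r$ let $\Pi_x=\prod_{i=1}^r\frac12(I+(-1)^{x_i}S_i)$. Let $\mathcal M(\sigma)=\sum_{x\in\mathbb F_2^r}|x\rangle\langle x|\otimes\Pi_x\sigma\Pi_x$. Let $B\subseteq[n]$ be recoverable, i.e. every Pauli operator supported on $B$ that commutes with all $S_i$ equals $\lambda S$ for some $S\in\mathcal S$ and $\lambda\in\{\pm1,\pm i\}$. Let $\mathcal E_B$ be a linear superoperator on $n$ qubits acting as the identity on the qubits outside $B$, and let $\rho$ be a density operator with $\Pi_0\rho\Pi_0=\rho$. Then there exist complex numbers $\alpha_x$ and Pauli operators $E_x$ supported on $B$ ($x\in\mathbb F_2^r$) such that $$\mathcal M(\mathcal E_B(\rho))=\sum_{x\in\mathbb F_2^r}\alpha_x\,|x\rangle\langle x|\otimes E_x\rho E_x.$$ If $\mathcal E_B$ is trace preserving, then $\sum_x\alpha_x=1$.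
   Context: Pauli operators are tensor products of $I,X,Y,Z$ with phases; a superoperator acts as the identity outside $B$ if it has the form $\mathcal I_{[n]\setminus B}\otimes\mathcal E$. *)

theory Defs
  imports Complex_Main "Jordan_Normal_Form.Matrix"
begin

text \<open>Computational basis of n qubits: index i < 2^n, qubit k (k < n) carries bit k of i.\<close>
definition qbit :: "nat \<Rightarrow> nat \<Rightarrow> nat" where
  "qbit i k = (i div 2 ^ k) mod 2"

text \<open>Single-qubit Paulis: 0 = I, 1 = X, 2 = Y, 3 = Z.\<close>
definition pauli1 :: "nat \<Rightarrow> complex mat" where
  "pauli1 a = (if a = 1 then mat_of_rows_list 2 [[0, 1], [1, 0]]
    else if a = 2 then mat_of_rows_list 2 [[0, -\<i>], [\<i>, 0]]
    else if a = 3 then mat_of_rows_list 2 [[1, 0], [0, -1]]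
    else mat_of_rows_list 2 [[1, 0], [0, 1]])"

definition pauli_string :: "nat \<Rightarrow> (nat \<Rightarrow> nat) \<Rightarrow> complex mat" where
  "pauli_string n p = mat (2 ^ n) (2 ^ n)
     (\<lambda>(i, j). \<Prod>k<n. pauli1 (p k) $$ (qbit i k, qbit j k))"

definition pauli_on :: "nat \<Rightarrow> nat set \<Rightarrow> complex mat \<Rightarrow> bool" where
  "pauli_on n B P \<longleftrightarrow> (\<exists>c p. c \<in> {1, -1, \<i>, -\<i>} \<and> (\<forall>k<n. p k < 4) \<and>
      (\<forall>k<n. k \<notin> B \<longrightarrow> p k = 0) \<and> P = c \<cdot>\<^sub>m pauli_string n p)"

definition is_pauli :: "nat \<Rightarrow> complex mat \<Rightarrow> bool" where
  "is_pauli n P \<longleftrightarrow> pauli_on n {0..<n} P"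

text \<open>The group generated by a set G of invertible N x N matrices of finite order
  (as for Pauli operators) is the monoid generated by G.\<close>
inductive_set gen_group :: "nat \<Rightarrow> complex mat set \<Rightarrow> complex mat set"
  for N :: nat and G :: "complex mat set" where
  one: "1\<^sub>m N \<in> gen_group N G"
| mult: "g \<in> G \<Longrightarrow> A \<in> gen_group N G \<Longrightarrow> g * A \<in> gen_group N G"

definition stab_group :: "nat \<Rightarrow> nat \<Rightarrow> (nat \<Rightarrow> complex mat) \<Rightarrow> complex mat set" where
  "stab_group n r S = gen_group (2 ^ n) (S ` {0..<r})"

definition stabilizer_generators :: "nat \<Rightarrow> nat \<Rightarrow> (nat \<Rightarrow> complex mat) \<Rightarrow> bool" where
  "stabilizer_generators n r S \<longleftrightarrow>
     (\<forall>i<r. is_pauli n (S i)) \<and>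
     (\<forall>i<r. \<forall>j<r. S i * S j = S j * S i) \<and>
     (\<forall>i<r. S i \<notin> gen_group (2 ^ n) (S ` ({0..<r} - {i}))) \<and>
     - 1\<^sub>m (2 ^ n) \<notin> stab_group n r S"

text \<open>Syndrome x in F_2^r encoded as x < 2^r, x_i = qbit x i.
  proj n S x k = prod_{i<k} (I + (-1)^{x_i} S_i)/2.\<close>
fun proj_upto :: "nat \<Rightarrow> (nat \<Rightarrow> complex mat) \<Rightarrow> nat \<Rightarrow> nat \<Rightarrow> complex mat" where
  "proj_upto n S x 0 = 1\<^sub>m (2 ^ n)"
| "proj_upto n S x (Suc k) = proj_upto n S x k *
     ((1/2) \<cdot>\<^sub>m (1\<^sub>m (2 ^ n) + ((-1) ^ qbit x k) \<cdot>\<^sub>m S k))"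

definition proj :: "nat \<Rightarrow> nat \<Rightarrow> (nat \<Rightarrow> complex mat) \<Rightarrow> nat \<Rightarrow> complex mat" where
  "proj n r S x = proj_upto n S x r"

text \<open>sum_{x<2^r} |x><x| (x) A_x  (classical register as the first tensor factor).\<close>
definition blockdiag :: "nat \<Rightarrow> nat \<Rightarrow> (nat \<Rightarrow> complex mat) \<Rightarrow> complex mat" where
  "blockdiag r N A = mat (2 ^ r * N) (2 ^ r * N)
     (\<lambda>(i, j). if i div N = j div N then A (i div N) $$ (i mod N, j mod N) else 0)"

definition syndrome_meas :: "nat \<Rightarrow> nat \<Rightarrow> (nat \<Rightarrow> complex mat) \<Rightarrow> complex mat \<Rightarrow> complex mat" where
  "syndrome_meas n r S \<sigma> = blockdiag r (2 ^ n) (\<lambda>x. proj n r S x * \<sigma> * proj n r S x)"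

definition recoverable :: "nat \<Rightarrow> nat \<Rightarrow> (nat \<Rightarrow> complex mat) \<Rightarrow> nat set \<Rightarrow> bool" where
  "recoverable n r S B \<longleftrightarrow> B \<subseteq> {0..<n} \<and>
     (\<forall>P. pauli_on n B P \<and> (\<forall>i<r. P * S i = S i * P) \<longrightarrow>
        (\<exists>T \<in> stab_group n r S. \<exists>c \<in> {1, -1, \<i>, -\<i>}. P = c \<cdot>\<^sub>m T))"

definition restrict_idx :: "nat set \<Rightarrow> nat \<Rightarrow> nat \<Rightarrow> nat" where
  "restrict_idx B n i = (\<Sum>k\<in>B \<inter> {0..<n}. qbit i k * 2 ^ k)"

definition agree_outside :: "nat set \<Rightarrow> nat \<Rightarrow> nat \<Rightarrow> nat \<Rightarrow> bool" where
  "agree_outside B n i i' \<longleftrightarrow> (\<forall>k<n. k \<notin> B \<longrightarrow> qbit i k = qbit i' k)"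

text \<open>E = I_{[n]\B} (x) E' for a linear superoperator E' on the qubits in B,
  given by its coefficients T: E'(|c'><d'|) = sum_{c,d} T c d c' d' |c><d|.\<close>
definition identity_outside :: "nat \<Rightarrow> nat set \<Rightarrow> (complex mat \<Rightarrow> complex mat) \<Rightarrow> bool" where
  "identity_outside n B E \<longleftrightarrow> (\<exists>T :: nat \<Rightarrow> nat \<Rightarrow> nat \<Rightarrow> nat \<Rightarrow> complex.
     \<forall>\<rho> \<in> carrier_mat (2 ^ n) (2 ^ n). E \<rho> = mat (2 ^ n) (2 ^ n) (\<lambda>(i, j).
       \<Sum>(i', j') \<in> {(i', j'). i' < 2 ^ n \<and> j' < 2 ^ n \<and> agree_outside B n i i' \<and> agree_outside B n j j'}.
         T (restrict_idx B n i) (restrict_idx B n j) (restrict_idx B n i') (restrict_idx B n j') * \<rho> $$ (i', j')))"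

definition mtrace :: "complex mat \<Rightarrow> complex" where
  "mtrace A = (\<Sum>i<dim_row A. A $$ (i, i))"

definition trace_preserving :: "nat \<Rightarrow> (complex mat \<Rightarrow> complex mat) \<Rightarrow> bool" where
  "trace_preserving n E \<longleftrightarrow> (\<forall>\<rho> \<in> carrier_mat (2 ^ n) (2 ^ n). mtrace (E \<rho>) = mtrace \<rho>)"

definition density_op :: "nat \<Rightarrow> complex mat \<Rightarrow> bool" where
  "density_op n \<rho> \<longleftrightarrow> \<rho> \<in> carrier_mat (2 ^ n) (2 ^ n) \<and>
     (\<forall>v \<in> carrier_vec (2 ^ n). conjugate v \<bullet> (\<rho> *\<^sub>v v) \<in> \<real> \<and> Re (conjugate v \<bullet> (\<rho> *\<^sub>v v)) \<ge> 0) \<and>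
     mtrace \<rho> = 1"

end

theory Submission
  imports Defs
begin

text \<open>
  In the Pauli basis on \<open>B\<close>, \<open>\<E>\<^sub>B(\<rho>)\<close> is a linear combination of terms \<open>P \<rho> Q\<close> with
  \<open>P\<close>, \<open>Q\<close> Pauli operators supported on \<open>B\<close>. A Pauli \<open>P\<close> moves the syndrome projectors:
  \<open>\<Pi>\<^sub>x P = P \<Pi>\<^sub>y\<close> where \<open>y\<close> is \<open>x\<close> shifted by the syndrome of \<open>P\<close>. As \<open>\<rho> = \<Pi>\<^sub>0 \<rho> \<Pi>\<^sub>0\<close>,
  the term \<open>\<Pi>\<^sub>x P \<rho> Q \<Pi>\<^sub>x\<close> vanishes unless \<open>P\<close> and \<open>Q\<close> both have syndrome \<open>x\<close>. Two Paulis
  on \<open>B\<close> with the same syndrome differ by a Pauli on \<open>B\<close> commuting with all \<open>S\<^sub>i\<close>, which by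
  recoverability is a stabilizer up to a phase and hence is absorbed by \<open>\<Pi>\<^sub>0\<close>. So every
  surviving term is a multiple of \<open>E\<^sub>x \<rho> E\<^sub>x\<close> for one fixed Pauli \<open>E\<^sub>x\<close> on \<open>B\<close> of syndrome \<open>x\<close>.
  The coefficient is \<open>\<alpha>\<^sub>x = tr (\<E>\<^sub>B(\<rho>) \<Pi>\<^sub>x)\<close>, and the \<open>\<Pi>\<^sub>x\<close> sum to the identity.
\<close>

text \<open>\<open>\<sigma>\<^sub>a \<sigma>\<^sub>b = pauli_prod_phase a b \<sigma>\<^sub>c\<close> with \<open>c = pauli_prod_label a b\<close>, and
  \<open>\<sigma>\<^sub>a \<sigma>\<^sub>b = pauli_comm_sign a b \<sigma>\<^sub>b \<sigma>\<^sub>a\<close> (see \<open>pauli1_entry_mult\<close>, \<open>pauli_prod_phase_swap\<close>).\<close>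
definition pauli_prod_phase :: "nat \<Rightarrow> nat \<Rightarrow> complex" where
  "pauli_prod_phase a b = (if a = 0 \<or> b = 0 \<or> a = b then 1 else
     if (a, b) \<in> {(1, 2), (2, 3), (3, 1)} then \<i> else - \<i>)"

definition pauli_prod_label :: "nat \<Rightarrow> nat \<Rightarrow> nat" where
  "pauli_prod_label a b = (if a = 0 then b else if b = 0 then a else if a = b then 0 else 6 - a - b)"

definition pauli_comm_sign :: "nat \<Rightarrow> nat \<Rightarrow> complex" where
  "pauli_comm_sign a b = (if a = 0 \<or> b = 0 \<or> a = b then 1 else -1)"

lemma less_4_cases: "(a::nat) < 4 \<Longrightarrow> a = 0 \<or> a = 1 \<or> a = 2 \<or> a = 3"
  by auto

lemma pauli1_entry_mult:
  assumes "a < 4" "b < 4" "s < 2" "t < 2"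
  shows "pauli1 a $$ (s, 0) * pauli1 b $$ (0, t) + pauli1 a $$ (s, 1) * pauli1 b $$ (1, t)
    = pauli_prod_phase a b * pauli1 (pauli_prod_label a b) $$ (s, t)"
proof -
  have "s = 0 \<or> s = 1" "t = 0 \<or> t = 1" using assms(3,4) by auto
  then show ?thesis using less_4_cases[OF assms(1)] less_4_cases[OF assms(2)]
    by (elim disjE) (simp_all add: pauli1_def mat_of_rows_list_def pauli_prod_phase_def pauli_prod_label_def)
qed

lemma pauli1_0_entry: "s < 2 \<Longrightarrow> t < 2 \<Longrightarrow> pauli1 0 $$ (s, t) = of_bool (s = t)"
  by (auto simp: pauli1_def mat_of_rows_list_def less_2_cases_iff)

lemma pauli_prod_phase_swap: "a < 4 \<Longrightarrow> b < 4 \<Longrightarrow> pauli_prod_phase a b = pauli_comm_sign a b * pauli_prod_phase b a"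
  using less_4_cases[of a] less_4_cases[of b] by (auto simp: pauli_prod_phase_def pauli_comm_sign_def)

lemma pauli_prod_label_commute: "pauli_prod_label a b = pauli_prod_label b a"
  by (auto simp: pauli_prod_label_def)

lemma pauli_prod_label_less_4: "a < 4 \<Longrightarrow> b < 4 \<Longrightarrow> pauli_prod_label a b < 4"
  by (auto simp: pauli_prod_label_def)

lemma pauli_prod_label_self [simp]: "pauli_prod_label a a = 0"
  by (simp add: pauli_prod_label_def)

lemma pauli_prod_phase_self [simp]: "pauli_prod_phase a a = 1"
  by (simp add: pauli_prod_phase_def)

lemma pauli_prod_phase_unit: "pauli_prod_phase a b \<in> {1, -1, \<i>, -\<i>}"
  by (simp add: pauli_prod_phase_def)

lemma unit_phase_mult:
  "a \<in> {1, -1, \<i>, -\<i>} \<Longrightarrow> b \<in> {1, -1, \<i>, -\<i>} \<Longrightarrow> a * b \<in> {1, -1, \<i>, -\<i> :: complex}"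
  by auto

lemma prod_phase_unit: "\<forall>k\<in>A. f k \<in> {1, -1, \<i>, -\<i>} \<Longrightarrow> prod f A \<in> {1, -1, \<i>, -\<i> :: complex}"
proof (induction A rule: infinite_finite_induct)
  case (insert x F)
  then have "f x \<in> {1, -1, \<i>, -\<i>}" "prod f F \<in> {1, -1, \<i>, -\<i>}" by auto
  then show ?case using insert(1,2) by (metis prod.insert unit_phase_mult)
qed auto

lemma prod_sign: "\<forall>k\<in>A. f k \<in> {1, -1} \<Longrightarrow> prod f A \<in> {1, -1 :: complex}"
proof (induction A rule: infinite_finite_induct)
  case (insert x F) then show ?case by auto
qed auto

lemma prod_of_bool_lessThan:
  fixes n :: nat
  shows "(\<Prod>k<n. of_bool (P k)) = (of_bool (\<forall>k<n. P k) :: 'a::comm_semiring_1)"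
  by (induction n) (auto simp: less_Suc_eq)

lemma qbit_less_2 [simp]: "qbit i k < 2"
  by (simp add: qbit_def)

lemma qbit_add_high: "l < 2 ^ n \<Longrightarrow> k < n \<Longrightarrow> qbit (l + 2 ^ n) k = qbit l k"
proof -
  assume k: "k < n"
  have "(2::nat) ^ n = 2 ^ k * 2 ^ (n - k)" using k by (simp flip: power_add)
  hence "(l + 2 ^ n) div 2 ^ k = l div 2 ^ k + 2 ^ (n - k)" by simp
  moreover have "(2::nat) ^ (n - k) = 2 * 2 ^ (n - k - 1)" using k by (simp flip: power_Suc)
  ultimately show ?thesis unfolding qbit_def by simp
qed

lemma qbit_high_0: "l < 2 ^ n \<Longrightarrow> qbit l n = 0"
  by (simp add: qbit_def)

lemma qbit_high_1: "l < 2 ^ n \<Longrightarrow> qbit (l + 2 ^ n) n = 1"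
  by (simp add: qbit_def)

lemma qbit_inject:
  assumes "i < 2 ^ n" "j < 2 ^ n" "\<forall>k<n. qbit i k = qbit j k"
  shows "i = j"
proof (rule bit_eqI)
  fix m
  have "qbit i m = qbit j m"
  proof (cases "m < n")
    case False
    then have "(2::nat) ^ n \<le> 2 ^ m" by simp
    then have "i < 2 ^ m" "j < 2 ^ m" using assms(1,2) by linarith+
    then have "i div 2 ^ m = 0" "j div 2 ^ m = 0" by auto
    then show ?thesis by (simp add: qbit_def)
  qed (use assms in auto)
  then show "bit i m = bit j m"
    by (simp add: bit_iff_odd qbit_def odd_iff_mod_2_eq_one)
qed

lemma sum_lessThan_power_Suc:
  fixes h :: "nat \<Rightarrow> 'a::comm_monoid_add"
  shows "(\<Sum>l<2 ^ Suc n. h l) = (\<Sum>l<2 ^ n. h l) + (\<Sum>l<2 ^ n. h (l + 2 ^ n))"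
proof -
  have split: "{..<2 ^ Suc n} = {..<2 ^ n} \<union> (\<lambda>l. l + 2 ^ n) ` {..<(2::nat) ^ n}"
  proof (intro equalityI subsetI)
    fix x :: nat assume "x \<in> {..<2 ^ Suc n}"
    then show "x \<in> {..<2 ^ n} \<union> (\<lambda>l. l + 2 ^ n) ` {..<(2::nat) ^ n}"
      by (cases "x < 2 ^ n") (auto intro!: image_eqI[where x = "x - 2 ^ n"])
  qed auto
  show ?thesis
    unfolding split by (subst sum.union_disjoint) (auto simp: sum.reindex inj_on_def)
qed

lemma sum_bits_prod:
  "(\<Sum>l<2 ^ n. \<Prod>k<n. F k (qbit l k)) = (\<Prod>k<n. F k 0 + F k 1 :: 'a::comm_semiring_1)"
proof (induction n)
  case (Suc n)
  have "(\<Sum>l<2 ^ Suc n. \<Prod>k<Suc n. F k (qbit l k))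
      = (\<Sum>l<2 ^ n. (\<Prod>k<n. F k (qbit l k)) * F n 0) + (\<Sum>l<2 ^ n. (\<Prod>k<n. F k (qbit l k)) * F n 1)"
    unfolding sum_lessThan_power_Suc
    by (intro arg_cong2[where f = "(+)"] sum.cong prod.cong)
      (auto simp: qbit_high_0 qbit_high_1 qbit_add_high)
  then show ?case using Suc by (simp add: sum_distrib_right[symmetric] distrib_left)
qed simp

lemma pauli_string_carrier [simp]: "pauli_string n p \<in> carrier_mat (2 ^ n) (2 ^ n)"
  by (simp add: pauli_string_def)

lemma pauli_string_dim [simp]:
  "dim_row (pauli_string n p) = 2 ^ n" "dim_col (pauli_string n p) = 2 ^ n"
  by (simp_all add: pauli_string_def)

lemma pauli_string_index:
  "i < 2 ^ n \<Longrightarrow> j < 2 ^ n \<Longrightarrow> pauli_string n p $$ (i, j) = (\<Prod>k<n. pauli1 (p k) $$ (qbit i k, qbit j k))"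
  by (simp add: pauli_string_def)

lemma index_mult_square:
  assumes "A \<in> carrier_mat N N" "B \<in> carrier_mat N N" "i < N" "j < N"
  shows "(A * B) $$ (i, j) = (\<Sum>l<N. A $$ (i, l) * B $$ (l, j))"
  using assms by (simp add: scalar_prod_def atLeast0LessThan)

lemma pauli_string_mult:
  assumes "\<forall>k<n. p k < 4" "\<forall>k<n. q k < 4"
  shows "pauli_string n p * pauli_string n q =
    (\<Prod>k<n. pauli_prod_phase (p k) (q k)) \<cdot>\<^sub>m pauli_string n (\<lambda>k. pauli_prod_label (p k) (q k))"
proof (rule eq_matI)
  fix i j assume "i < dim_row ((\<Prod>k<n. pauli_prod_phase (p k) (q k)) \<cdot>\<^sub>m pauli_string n (\<lambda>k. pauli_prod_label (p k) (q k)))"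
    "j < dim_col ((\<Prod>k<n. pauli_prod_phase (p k) (q k)) \<cdot>\<^sub>m pauli_string n (\<lambda>k. pauli_prod_label (p k) (q k)))"
  hence i: "i < 2 ^ n" and j: "j < 2 ^ n" by simp_all
  have "(pauli_string n p * pauli_string n q) $$ (i, j) =
      (\<Sum>l<2 ^ n. \<Prod>k<n. pauli1 (p k) $$ (qbit i k, qbit l k) * pauli1 (q k) $$ (qbit l k, qbit j k))"
    using i j by (simp add: index_mult_square[of _ "2 ^ n"] pauli_string_index prod.distrib
        del: index_mult_mat)
  also have "\<dots> = (\<Prod>k<n. pauli1 (p k) $$ (qbit i k, 0) * pauli1 (q k) $$ (0, qbit j k)
                      + pauli1 (p k) $$ (qbit i k, 1) * pauli1 (q k) $$ (1, qbit j k))"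
    by (rule sum_bits_prod)
  also have "\<dots> = (\<Prod>k<n. pauli_prod_phase (p k) (q k) * pauli1 (pauli_prod_label (p k) (q k)) $$ (qbit i k, qbit j k))"
    using assms by (intro prod.cong refl) (metis lessThan_iff pauli1_entry_mult qbit_less_2)
  finally show "(pauli_string n p * pauli_string n q) $$ (i, j) =
      ((\<Prod>k<n. pauli_prod_phase (p k) (q k)) \<cdot>\<^sub>m pauli_string n (\<lambda>k. pauli_prod_label (p k) (q k))) $$ (i, j)"
    using i j by (simp add: pauli_string_index prod.distrib)
qed auto

lemma smult_smult_mat: "a \<cdot>\<^sub>m (b \<cdot>\<^sub>m (M :: 'a::semigroup_mult mat)) = (a * b) \<cdot>\<^sub>m M"
  by (intro eq_matI) (auto simp: mult.assoc)

lemma one_smult_mat [simp]: "1 \<cdot>\<^sub>m (M :: 'a::monoid_mult mat) = M"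
  by (intro eq_matI) auto

lemma smult_mult_smult:
  assumes "A \<in> carrier_mat nr n" "B \<in> carrier_mat n nc"
  shows "(a \<cdot>\<^sub>m A) * (b \<cdot>\<^sub>m B) = (a * b) \<cdot>\<^sub>m (A * B :: 'a::comm_ring mat)"
  using assms by (simp add: mult_smult_assoc_mat[of _ nr n] mult_smult_distrib[of _ nr n] smult_smult_mat mult.commute)

lemma pauli_string_commute:
  assumes p: "\<forall>k<n. p k < 4" and q: "\<forall>k<n. q k < 4"
  shows "pauli_string n p * pauli_string n q =
     (\<Prod>k<n. pauli_comm_sign (p k) (q k)) \<cdot>\<^sub>m (pauli_string n q * pauli_string n p)"
proof -
  have "(\<Prod>k<n. pauli_prod_phase (p k) (q k)) =
      (\<Prod>k<n. pauli_comm_sign (p k) (q k)) * (\<Prod>k<n. pauli_prod_phase (q k) (p k))"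
    unfolding prod.distrib[symmetric] using p q by (intro prod.cong refl) (metis lessThan_iff pauli_prod_phase_swap)
  then show ?thesis
    using pauli_string_mult[OF p q] pauli_string_mult[OF q p]
    by (simp add: pauli_prod_label_commute smult_smult_mat)
qed

lemma pauli_string_eq_one:
  assumes "\<forall>k<n. p k = 0"
  shows "pauli_string n p = 1\<^sub>m (2 ^ n)"
proof (rule eq_matI)
  fix i j assume "i < dim_row (1\<^sub>m (2 ^ n))" "j < dim_col (1\<^sub>m (2 ^ n))"
  hence i: "i < 2 ^ n" and j: "j < 2 ^ n" by auto
  have "pauli_string n p $$ (i, j) = (\<Prod>k<n. of_bool (qbit i k = qbit j k))"
    using i j assms by (simp add: pauli_string_index pauli1_0_entry)
  also have "\<dots> = of_bool (\<forall>k<n. qbit i k = qbit j k)"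
    by (rule prod_of_bool_lessThan)
  also have "\<dots> = of_bool (i = j)"
    using qbit_inject[OF i j] by auto
  finally show "pauli_string n p $$ (i, j) = 1\<^sub>m (2 ^ n) $$ (i, j)" using i j by simp
qed auto

lemma pauli_string_square:
  "\<forall>k<n. p k < 4 \<Longrightarrow> pauli_string n p * pauli_string n p = 1\<^sub>m (2 ^ n)"
  using pauli_string_mult pauli_string_eq_one[of n "\<lambda>k. pauli_prod_label (p k) (p k)"] by simp

definition mat_sum :: "nat \<Rightarrow> 'a set \<Rightarrow> ('a \<Rightarrow> 'b::comm_monoid_add mat) \<Rightarrow> 'b mat" where
  "mat_sum N F h = mat N N (\<lambda>(i, j). \<Sum>a\<in>F. h a $$ (i, j))"

lemma mat_sum_carrier [simp]: "mat_sum N F h \<in> carrier_mat N N"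
  by (simp add: mat_sum_def)

lemma mat_sum_dim [simp]: "dim_row (mat_sum N F h) = N" "dim_col (mat_sum N F h) = N"
  by (simp_all add: mat_sum_def)

lemma mat_sum_index: "i < N \<Longrightarrow> j < N \<Longrightarrow> mat_sum N F h $$ (i, j) = (\<Sum>a\<in>F. h a $$ (i, j))"
  by (simp add: mat_sum_def)

lemma mat_sum_cong: "(\<And>a. a \<in> F \<Longrightarrow> h a = g a) \<Longrightarrow> mat_sum N F h = mat_sum N F g"
  unfolding mat_sum_def by (intro eq_matI) auto

lemma mult_mat_sum:
  assumes A: "A \<in> carrier_mat N N" and h: "\<forall>a\<in>F. h a \<in> carrier_mat N N"
  shows "A * mat_sum N F h = mat_sum N F (\<lambda>a. A * h a :: 'b::comm_semiring_0 mat)"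
proof (rule eq_matI)
  fix i j assume "i < dim_row (mat_sum N F (\<lambda>a. A * h a))" "j < dim_col (mat_sum N F (\<lambda>a. A * h a))"
  hence i: "i < N" and j: "j < N" by auto
  have "(A * mat_sum N F h) $$ (i, j) = (\<Sum>l<N. \<Sum>a\<in>F. A $$ (i, l) * h a $$ (l, j))"
    using A i j by (simp add: index_mult_square[of _ N] mat_sum_index sum_distrib_left del: index_mult_mat)
  also have "\<dots> = (\<Sum>a\<in>F. (A * h a) $$ (i, j))"
    using A h i j by (subst sum.swap) (simp add: index_mult_square[of _ N] del: index_mult_mat)
  finally show "(A * mat_sum N F h) $$ (i, j) = mat_sum N F (\<lambda>a. A * h a) $$ (i, j)"
    using i j by (simp add: mat_sum_index)
qed (use A in auto)

lemma mat_sum_mult: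
  assumes A: "A \<in> carrier_mat N N" and h: "\<forall>a\<in>F. h a \<in> carrier_mat N N"
  shows "mat_sum N F h * A = mat_sum N F (\<lambda>a. h a * A :: 'b::comm_semiring_0 mat)"
proof (rule eq_matI)
  fix i j assume "i < dim_row (mat_sum N F (\<lambda>a. h a * A))" "j < dim_col (mat_sum N F (\<lambda>a. h a * A))"
  hence i: "i < N" and j: "j < N" by auto
  have "(mat_sum N F h * A) $$ (i, j) = (\<Sum>l<N. \<Sum>a\<in>F. h a $$ (i, l) * A $$ (l, j))"
    using A i j by (simp add: index_mult_square[of _ N] mat_sum_index sum_distrib_right del: index_mult_mat)
  also have "\<dots> = (\<Sum>a\<in>F. (h a * A) $$ (i, j))"
    using A h i j by (subst sum.swap) (simp add: index_mult_square[of _ N] del: index_mult_mat)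
  finally show "(mat_sum N F h * A) $$ (i, j) = mat_sum N F (\<lambda>a. h a * A) $$ (i, j)"
    using i j by (simp add: mat_sum_index)
qed (use A in auto)

lemma mat_sum_smult:
  assumes "\<forall>a\<in>F. h a = c a \<cdot>\<^sub>m M" and "M \<in> carrier_mat N N"
  shows "mat_sum N F h = (\<Sum>a\<in>F. c a) \<cdot>\<^sub>m (M :: 'b::comm_semiring_0 mat)"
  using assms by (intro eq_matI) (auto simp: mat_sum_index sum_distrib_right)

lemma mat_sum_lessThan_power_Suc:
  fixes h :: "nat \<Rightarrow> 'b::comm_monoid_add mat"
  shows "mat_sum N {..<2 ^ Suc k} h = mat_sum N {..<2 ^ k} h + mat_sum N {..<2 ^ k} (\<lambda>x. h (x + 2 ^ k))"
  by (intro eq_matI) (simp_all add: mat_sum_index sum_lessThan_power_Suc del: power_Suc)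

lemma mtrace_mult_commute:
  assumes A: "A \<in> carrier_mat N N" and B: "B \<in> carrier_mat N N"
  shows "mtrace (A * B) = mtrace (B * A)"
proof -
  have "mtrace (A * B) = (\<Sum>i<N. \<Sum>l<N. A $$ (i, l) * B $$ (l, i))"
    using A B by (simp add: mtrace_def scalar_prod_def atLeast0LessThan)
  also have "\<dots> = (\<Sum>l<N. \<Sum>i<N. B $$ (l, i) * A $$ (i, l))"
    by (subst sum.swap) (simp add: mult.commute)
  also have "\<dots> = mtrace (B * A)"
    using A B by (simp add: mtrace_def scalar_prod_def atLeast0LessThan)
  finally show ?thesis .
qed

lemma mtrace_smult: "A \<in> carrier_mat N N \<Longrightarrow> mtrace (c \<cdot>\<^sub>m A) = c * mtrace A"
  unfolding mtrace_def sum_distrib_left by simp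

lemma mtrace_mat_sum:
  assumes "\<forall>a\<in>F. h a \<in> carrier_mat N N"
  shows "mtrace (mat_sum N F h) = (\<Sum>a\<in>F. mtrace (h a))"
proof -
  have "mtrace (mat_sum N F h) = (\<Sum>i<N. \<Sum>a\<in>F. h a $$ (i, i))"
    unfolding mtrace_def by (simp add: mat_sum_index)
  also have "\<dots> = (\<Sum>a\<in>F. mtrace (h a))"
    using assms unfolding mtrace_def by (subst sum.swap) (auto intro!: sum.cong)
  finally show ?thesis .
qed

lemma mult_one_plus_smult:
  assumes A: "A \<in> carrier_mat N N" and B: "B \<in> carrier_mat N N"
  shows "A * (x \<cdot>\<^sub>m 1\<^sub>m N + y \<cdot>\<^sub>m B) = x \<cdot>\<^sub>m A + y \<cdot>\<^sub>m (A * B :: 'a::comm_ring_1 mat)"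
proof -
  have "A * (x \<cdot>\<^sub>m 1\<^sub>m N + y \<cdot>\<^sub>m B) = A * (x \<cdot>\<^sub>m 1\<^sub>m N) + A * (y \<cdot>\<^sub>m B)"
    using A B by (intro mult_add_distrib_mat) auto
  also have "A * (x \<cdot>\<^sub>m 1\<^sub>m N) = x \<cdot>\<^sub>m A"
    using A by (subst mult_smult_distrib[of _ N N]) auto
  also have "A * (y \<cdot>\<^sub>m B) = y \<cdot>\<^sub>m (A * B)"
    using A B by (subst mult_smult_distrib[of _ N N]) auto
  finally show ?thesis .
qed

lemma one_plus_smult_mult:
  assumes A: "A \<in> carrier_mat N N" and B: "B \<in> carrier_mat N N"
  shows "(x \<cdot>\<^sub>m 1\<^sub>m N + y \<cdot>\<^sub>m B) * A = x \<cdot>\<^sub>m A + y \<cdot>\<^sub>m (B * A :: 'a::comm_ring_1 mat)"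
proof -
  have "(x \<cdot>\<^sub>m 1\<^sub>m N + y \<cdot>\<^sub>m B) * A = (x \<cdot>\<^sub>m 1\<^sub>m N) * A + (y \<cdot>\<^sub>m B) * A"
    using A B by (intro add_mult_distrib_mat) auto
  also have "(x \<cdot>\<^sub>m 1\<^sub>m N) * A = x \<cdot>\<^sub>m A"
    using A by (subst mult_smult_assoc_mat[of _ N N]) auto
  also have "(y \<cdot>\<^sub>m B) * A = y \<cdot>\<^sub>m (B * A)"
    using A B by (subst mult_smult_assoc_mat[of _ N N]) auto
  finally show ?thesis .
qed

definition eigen_proj :: "nat \<Rightarrow> (nat \<Rightarrow> complex mat) \<Rightarrow> complex \<Rightarrow> nat \<Rightarrow> complex mat" where
  "eigen_proj N S a i = (1/2) \<cdot>\<^sub>m 1\<^sub>m N + (a/2) \<cdot>\<^sub>m S i"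

fun sign_proj :: "nat \<Rightarrow> (nat \<Rightarrow> complex mat) \<Rightarrow> (nat \<Rightarrow> complex) \<Rightarrow> nat \<Rightarrow> complex mat" where
  "sign_proj N S f 0 = 1\<^sub>m N"
| "sign_proj N S f (Suc k) = sign_proj N S f k * eigen_proj N S (f k) k"

lemma sign_proj_cong: "\<forall>i<k. f i = g i \<Longrightarrow> sign_proj N S f k = sign_proj N S g k"
  by (induction k) auto

definition syndrome_sign :: "nat \<Rightarrow> nat \<Rightarrow> complex" where
  "syndrome_sign x i = (-1) ^ qbit x i"

lemma syndrome_sign_sign: "syndrome_sign x i \<in> {1, -1}"
  using qbit_less_2[of x i] by (auto simp: syndrome_sign_def less_2_cases_iff)

lemma proj_upto_eq_sign_proj:
  "\<forall>i<k. S i \<in> carrier_mat (2 ^ n) (2 ^ n) \<Longrightarrow> proj_upto n S x k = sign_proj (2 ^ n) S (syndrome_sign x) k"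
proof (induction k)
  case (Suc k)
  have "(1/2) \<cdot>\<^sub>m (1\<^sub>m (2 ^ n) + ((-1) ^ qbit x k) \<cdot>\<^sub>m S k) = eigen_proj (2 ^ n) S (syndrome_sign x k) k"
    using Suc.prems unfolding eigen_proj_def syndrome_sign_def by (intro eq_matI) (auto simp: algebra_simps)
  then show ?case using Suc by simp
qed simp

locale commuting_involutions =
  fixes N :: nat and r :: nat and S :: "nat \<Rightarrow> complex mat"
  assumes carrier: "\<And>i. i < r \<Longrightarrow> S i \<in> carrier_mat N N"
    and square: "\<And>i. i < r \<Longrightarrow> S i * S i = 1\<^sub>m N"
    and commute: "\<And>i j. i < r \<Longrightarrow> j < r \<Longrightarrow> S i * S j = S j * S i"
begin

declare carrier [simp]

lemma involution_dim [simp]: "i < r \<Longrightarrow> dim_row (S i) = N" "i < r \<Longrightarrow> dim_col (S i) = N"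
  using carrier by blast+

lemma eigen_proj_carrier [simp]: "i < r \<Longrightarrow> eigen_proj N S a i \<in> carrier_mat N N"
  by (simp add: eigen_proj_def)

lemma eigen_proj_dim [simp]:
  "i < r \<Longrightarrow> dim_row (eigen_proj N S a i) = N" "i < r \<Longrightarrow> dim_col (eigen_proj N S a i) = N"
  by (simp_all add: eigen_proj_def)

lemma sign_proj_carrier [simp]: "k \<le> r \<Longrightarrow> sign_proj N S f k \<in> carrier_mat N N"
  by (induction k) auto

lemma sign_proj_carrier_less [simp]: "k < r \<Longrightarrow> sign_proj N S f k \<in> carrier_mat N N"
  by simp

lemma sign_proj_dim [simp]:
  "k \<le> r \<Longrightarrow> dim_row (sign_proj N S f k) = N" "k \<le> r \<Longrightarrow> dim_col (sign_proj N S f k) = N"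
  using sign_proj_carrier by blast+

lemmas assoc_N = assoc_mult_mat[of _ N N _ N _ N]
lemmas mult_carrier_N [simp] = mult_carrier_mat[of _ N N _ N]

lemma eigen_proj_pass:
  assumes A: "A \<in> carrier_mat N N" and i: "i < r" and e: "A * S i = e \<cdot>\<^sub>m (S i * A)"
  shows "A * eigen_proj N S a i = eigen_proj N S (e * a) i * A"
  unfolding eigen_proj_def mult_one_plus_smult[OF A carrier[OF i]] one_plus_smult_mult[OF A carrier[OF i]] e
  using A i by (intro eq_matI) auto

lemma eigen_proj_commute:
  assumes "A \<in> carrier_mat N N" "i < r" "A * S i = S i * A"
  shows "A * eigen_proj N S a i = eigen_proj N S a i * A"
  using eigen_proj_pass[of A i 1 a] assms by simp

lemma eigen_proj_commute_involution:
  "i < r \<Longrightarrow> j < r \<Longrightarrow> eigen_proj N S a i * S j = S j * eigen_proj N S a i"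
  using eigen_proj_commute[of "S j" i a] by (simp add: commute)

lemma eigen_proj_mult:
  assumes i: "i < r"
  shows "eigen_proj N S a i * eigen_proj N S b i = ((1 + a * b)/4) \<cdot>\<^sub>m 1\<^sub>m N + ((a + b)/4) \<cdot>\<^sub>m S i"
proof -
  have "S i * eigen_proj N S b i = (1/2) \<cdot>\<^sub>m S i + (b/2) \<cdot>\<^sub>m 1\<^sub>m N"
    unfolding eigen_proj_def using i by (simp add: mult_one_plus_smult[of _ N] square)
  then have "eigen_proj N S a i * eigen_proj N S b i
      = (1/2) \<cdot>\<^sub>m eigen_proj N S b i + (a/2) \<cdot>\<^sub>m ((1/2) \<cdot>\<^sub>m S i + (b/2) \<cdot>\<^sub>m 1\<^sub>m N)"
    unfolding eigen_proj_def[of N S a] using i by (simp add: one_plus_smult_mult[of _ N])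
  then show ?thesis
    using i by (auto intro!: eq_matI simp: eigen_proj_def algebra_simps add_divide_distrib)
qed

lemma eigen_proj_idem:
  assumes "i < r" "a \<in> {1, -1}"
  shows "eigen_proj N S a i * eigen_proj N S a i = eigen_proj N S a i"
  unfolding eigen_proj_mult[OF assms(1)] using assms by (auto intro!: eq_matI simp: eigen_proj_def)

lemma eigen_proj_orth: "i < r \<Longrightarrow> a \<in> {1, -1} \<Longrightarrow> eigen_proj N S a i * eigen_proj N S (- a) i = 0\<^sub>m N N"
  by (auto intro!: eq_matI simp: eigen_proj_mult)

lemma eigen_proj_sum: "i < r \<Longrightarrow> eigen_proj N S 1 i + eigen_proj N S (-1) i = 1\<^sub>m N"
  unfolding eigen_proj_def by (intro eq_matI) auto

lemma involution_mult_eigen_proj: "i < r \<Longrightarrow> S i * eigen_proj N S 1 i = eigen_proj N S 1 i"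
  unfolding eigen_proj_def by (subst mult_one_plus_smult[of _ N]) (auto intro!: eq_matI simp: square)

lemma sign_proj_pass:
  assumes A: "A \<in> carrier_mat N N" and k: "k \<le> r"
    and e: "\<forall>i<k. A * S i = e i \<cdot>\<^sub>m (S i * A)"
  shows "A * sign_proj N S f k = sign_proj N S (\<lambda>i. e i * f i) k * A"
  using k e
proof (induction k)
  case (Suc k)
  then have k: "k < r" by simp_all
  have "A * sign_proj N S f (Suc k) = (A * sign_proj N S f k) * eigen_proj N S (f k) k"
    using A k by (simp add: assoc_N)
  also have "\<dots> = sign_proj N S (\<lambda>i. e i * f i) k * (A * eigen_proj N S (f k) k)"
    using Suc A k by (simp add: assoc_N)
  also have "A * eigen_proj N S (f k) k = eigen_proj N S (e k * f k) k * A"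
    using Suc A k by (intro eigen_proj_pass) auto
  finally show ?case
    using A k by (simp add: assoc_N)
qed (use A in simp)

lemma sign_proj_commute:
  assumes "A \<in> carrier_mat N N" "k \<le> r" "\<forall>i<k. A * S i = S i * A"
  shows "A * sign_proj N S f k = sign_proj N S f k * A"
  using sign_proj_pass[of A k "\<lambda>_. 1" f] assms by simp

lemma sign_proj_mult:
  assumes k: "k \<le> r" and "\<forall>i<k. f i \<in> {1, -1}" and "\<forall>i<k. g i \<in> {1, -1}"
  shows "sign_proj N S f k * sign_proj N S g k = (if \<forall>i<k. f i = g i then sign_proj N S f k else 0\<^sub>m N N)"
  using assms
proof (induction k)
  case (Suc k)
  then have k: "k < r" and fk: "f k \<in> {1, -1}" and gk: "g k \<in> {1, -1}" by auto
  have "sign_proj N S f (Suc k) * sign_proj N S g (Suc k) =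
      sign_proj N S f k * (eigen_proj N S (f k) k * sign_proj N S g k) * eigen_proj N S (g k) k"
    using k by (simp add: assoc_N)
  also have "eigen_proj N S (f k) k * sign_proj N S g k = sign_proj N S g k * eigen_proj N S (f k) k"
    using k by (intro sign_proj_commute) (auto simp: eigen_proj_commute_involution)
  also have "sign_proj N S f k * (sign_proj N S g k * eigen_proj N S (f k) k) * eigen_proj N S (g k) k =
      (sign_proj N S f k * sign_proj N S g k) * (eigen_proj N S (f k) k * eigen_proj N S (g k) k)"
    using k by (simp add: assoc_N)
  also have "eigen_proj N S (f k) k * eigen_proj N S (g k) k = (if f k = g k then eigen_proj N S (f k) k else 0\<^sub>m N N)"
    using fk gk k eigen_proj_idem[of k "f k"] eigen_proj_orth[of k "f k"] by auto
  finally show ?case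
    using Suc k by (auto simp: less_Suc_eq)
qed simp

lemma sign_proj_absorbs_involution:
  assumes "j < r"
  shows "S j * sign_proj N S (\<lambda>_. 1) r = sign_proj N S (\<lambda>_. 1) r"
    and "sign_proj N S (\<lambda>_. 1) r * S j = sign_proj N S (\<lambda>_. 1) r"
proof -
  have "j < k \<Longrightarrow> k \<le> r \<Longrightarrow> S j * sign_proj N S (\<lambda>_. 1) k = sign_proj N S (\<lambda>_. 1) k" for k
  proof (induction k)
    case (Suc k)
    then have k: "k < r" by simp_all
    show ?case
    proof (cases "j = k")
      case True
      have "S j * sign_proj N S (\<lambda>_. 1) (Suc k) = (S j * sign_proj N S (\<lambda>_. 1) k) * eigen_proj N S 1 k"
        using k True by (simp add: assoc_N)
      also have "S j * sign_proj N S (\<lambda>_. 1) k = sign_proj N S (\<lambda>_. 1) k * S j"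
        using k True by (intro sign_proj_commute) (auto simp: commute)
      finally have "S j * sign_proj N S (\<lambda>_. 1) (Suc k) = sign_proj N S (\<lambda>_. 1) k * (S j * eigen_proj N S 1 k)"
        using k True by (simp add: assoc_N)
      then show ?thesis using True k involution_mult_eigen_proj by simp
    next
      case False
      then show ?thesis using Suc k by (simp add: assoc_N[symmetric])
    qed
  qed simp
  then show left: "S j * sign_proj N S (\<lambda>_. 1) r = sign_proj N S (\<lambda>_. 1) r"
    using assms by simp
  then show "sign_proj N S (\<lambda>_. 1) r * S j = sign_proj N S (\<lambda>_. 1) r"
    using assms sign_proj_commute[of "S j" r] by (simp add: commute)
qed

lemma gen_group_carrier: "T \<in> gen_group N (S ` {0..<r}) \<Longrightarrow> T \<in> carrier_mat N N"
  by (induction rule: gen_group.induct) auto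

lemma gen_group_absorbed:
  assumes "T \<in> gen_group N (S ` {0..<r})"
  shows "T * sign_proj N S (\<lambda>_. 1) r = sign_proj N S (\<lambda>_. 1) r"
    and "sign_proj N S (\<lambda>_. 1) r * T = sign_proj N S (\<lambda>_. 1) r"
  using assms
proof (induction rule: gen_group.induct)
  case (mult g A)
  {
    case 1
    from mult obtain j where "j < r" "g = S j" by auto
    then show ?case using mult gen_group_carrier sign_proj_absorbs_involution by (simp add: assoc_N)
  next
    case 2
    from mult obtain j where "j < r" "g = S j" by auto
    then show ?case using mult gen_group_carrier sign_proj_absorbs_involution by (simp add: assoc_N[symmetric])
  }
qed simp_all

lemma sum_sign_proj:
  "k \<le> r \<Longrightarrow> mat_sum N {..<2 ^ k} (\<lambda>x. sign_proj N S (syndrome_sign x) k) = 1\<^sub>m N"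
proof (induction k)
  case 0
  show ?case unfolding mat_sum_def by (intro eq_matI) auto
next
  case (Suc k)
  then have k: "k < r" "k \<le> r" by simp_all
  have high: "sign_proj N S (syndrome_sign (x + 2 ^ k)) k = sign_proj N S (syndrome_sign x) k" if "x < 2 ^ k" for x
    using that by (intro sign_proj_cong) (simp add: syndrome_sign_def qbit_add_high)
  have "mat_sum N {..<2 ^ Suc k} (\<lambda>x. sign_proj N S (syndrome_sign x) (Suc k))
      = mat_sum N {..<2 ^ k} (\<lambda>x. sign_proj N S (syndrome_sign x) k * eigen_proj N S 1 k)
        + mat_sum N {..<2 ^ k} (\<lambda>x. sign_proj N S (syndrome_sign x) k * eigen_proj N S (-1) k)"
    unfolding mat_sum_lessThan_power_Suc
    by (intro arg_cong2[where f = "(+)"] mat_sum_cong)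
      (simp_all add: high syndrome_sign_def qbit_high_0 qbit_high_1)
  also have "\<dots> = mat_sum N {..<2 ^ k} (\<lambda>x. sign_proj N S (syndrome_sign x) k) * eigen_proj N S 1 k
        + mat_sum N {..<2 ^ k} (\<lambda>x. sign_proj N S (syndrome_sign x) k) * eigen_proj N S (-1) k"
    using k by (simp add: mat_sum_mult)
  finally show ?case
    using Suc k eigen_proj_sum[of k] by simp
qed

end

text \<open>\<open>|0\<rangle>\<langle>0| = (I + Z)/2\<close>, \<open>|1\<rangle>\<langle>1| = (I - Z)/2\<close>, \<open>|0\<rangle>\<langle>1| = (X + iY)/2\<close>, \<open>|1\<rangle>\<langle>0| = (X - iY)/2\<close>.\<close>
definition unit_pauli_coeff :: "nat \<Rightarrow> nat \<Rightarrow> nat \<Rightarrow> complex" where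
  "unit_pauli_coeff a b q = (if a = b then (if q = 0 then 1/2 else if q = 3 then (if a = 0 then 1/2 else -1/2) else 0)
     else (if q = 1 then 1/2 else if q = 2 then (if a = 0 then \<i>/2 else -\<i>/2) else 0))"

lemma unit_pauli_coeff_sum:
  assumes "a < 2" "b < 2" "u < 2" "v < 2"
  shows "(\<Sum>q\<in>{0..<4}. unit_pauli_coeff a b q * pauli1 q $$ (u, v)) = of_bool (u = a \<and> v = b)"
proof -
  have "{0..<4::nat} = {0, 1, 2, 3}" by auto
  moreover have "a = 0 \<or> a = 1" "b = 0 \<or> b = 1" "u = 0 \<or> u = 1" "v = 0 \<or> v = 1" using assms by auto
  ultimately show ?thesis
    by (elim disjE) (simp_all add: unit_pauli_coeff_def pauli1_def mat_of_rows_list_def field_simps)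
qed

definition assignments :: "nat \<Rightarrow> nat set \<Rightarrow> (nat \<Rightarrow> nat) set" where
  "assignments n B = PiE (B \<inter> {0..<n}) (\<lambda>_. {0..<2})"

definition assignment_of :: "nat \<Rightarrow> nat set \<Rightarrow> nat \<Rightarrow> nat \<Rightarrow> nat" where
  "assignment_of n B i = restrict (qbit i) (B \<inter> {0..<n})"

definition assignment_index :: "nat \<Rightarrow> nat set \<Rightarrow> (nat \<Rightarrow> nat) \<Rightarrow> nat" where
  "assignment_index n B f = (\<Sum>k\<in>B \<inter> {0..<n}. f k * 2 ^ k)"

definition B_pauli_labels :: "nat \<Rightarrow> nat set \<Rightarrow> (nat \<Rightarrow> nat) set" where
  "B_pauli_labels n B = PiE {..<n} (\<lambda>k. if k \<in> B then {0..<4} else {0})"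

definition unit_coeff :: "nat \<Rightarrow> nat set \<Rightarrow> (nat \<Rightarrow> nat) \<Rightarrow> (nat \<Rightarrow> nat) \<Rightarrow> (nat \<Rightarrow> nat) \<Rightarrow> complex" where
  "unit_coeff n B f f' p = (\<Prod>k<n. if k \<in> B then unit_pauli_coeff (f k) (f' k) (p k) else 1)"

text \<open>The matrix unit \<open>|f\<rangle>\<langle>f'|\<close> on the qubits in \<open>B\<close>, tensored with the identity outside \<open>B\<close>,
  written in the Pauli basis.\<close>
definition B_unit :: "nat \<Rightarrow> nat set \<Rightarrow> (nat \<Rightarrow> nat) \<Rightarrow> (nat \<Rightarrow> nat) \<Rightarrow> complex mat" where
  "B_unit n B f f' = mat_sum (2 ^ n) (B_pauli_labels n B) (\<lambda>p. unit_coeff n B f f' p \<cdot>\<^sub>m pauli_string n p)"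

lemma finite_assignments: "finite (assignments n B)"
  unfolding assignments_def by (intro finite_PiE) auto

lemma assignment_of_in: "assignment_of n B i \<in> assignments n B"
  unfolding assignment_of_def assignments_def by auto

lemma assignment_index_of: "assignment_index n B (assignment_of n B i) = restrict_idx B n i"
  unfolding assignment_index_def assignment_of_def restrict_idx_def by (intro sum.cong) auto

lemma eq_assignment_of_iff:
  "f \<in> assignments n B \<Longrightarrow> f = assignment_of n B i \<longleftrightarrow> (\<forall>k\<in>B \<inter> {0..<n}. f k = qbit i k)"
  unfolding assignments_def assignment_of_def by (auto simp: PiE_iff extensional_def fun_eq_iff)

lemma B_unit_carrier [simp]: "B_unit n B f f' \<in> carrier_mat (2 ^ n) (2 ^ n)"
  by (simp add: B_unit_def)

lemma B_unit_dim [simp]: "dim_row (B_unit n B f f') = 2 ^ n" "dim_col (B_unit n B f f') = 2 ^ n"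
  by (simp_all add: B_unit_def)

lemma agree_outside_sym: "agree_outside B n i j = agree_outside B n j i"
  unfolding agree_outside_def by auto

lemma B_unit_index:
  assumes f: "f \<in> assignments n B" and f': "f' \<in> assignments n B" and i: "i < 2 ^ n" and a: "a < 2 ^ n"
  shows "B_unit n B f f' $$ (i, a) = of_bool (agree_outside B n i a \<and> f = assignment_of n B i \<and> f' = assignment_of n B a)"
proof -
  define h where "h k q = (if k \<in> B then unit_pauli_coeff (f k) (f' k) q else 1) * pauli1 q $$ (qbit i k, qbit a k)" for k q
  have "B_unit n B f f' $$ (i, a) = (\<Sum>p\<in>B_pauli_labels n B. \<Prod>k<n. h k (p k))"
    unfolding B_unit_def using i a
    by (simp add: mat_sum_index unit_coeff_def pauli_string_index h_def prod.distrib)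
  also have "\<dots> = (\<Prod>k<n. \<Sum>q\<in>(if k \<in> B then {0..<4} else {0}). h k q)"
    unfolding B_pauli_labels_def by (rule prod_sum_PiE[symmetric]) auto
  also have "\<dots> = (\<Prod>k<n. of_bool (if k \<in> B then qbit i k = f k \<and> qbit a k = f' k else qbit i k = qbit a k))"
  proof (rule prod.cong[OF refl])
    fix k assume k: "k \<in> {..<n}"
    show "(\<Sum>q\<in>(if k \<in> B then {0..<4} else {0}). h k q) =
      of_bool (if k \<in> B then qbit i k = f k \<and> qbit a k = f' k else qbit i k = qbit a k)"
    proof (cases "k \<in> B")
      case True
      then have "f k < 2" "f' k < 2" using f f' k by (auto simp: assignments_def PiE_iff)
      then show ?thesis using True unfolding h_def by (simp add: unit_pauli_coeff_sum)
    qed (simp add: h_def pauli1_0_entry)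
  qed
  also have "\<dots> = of_bool (\<forall>k<n. if k \<in> B then qbit i k = f k \<and> qbit a k = f' k else qbit i k = qbit a k)"
    by (rule prod_of_bool_lessThan)
  also have "(\<forall>k<n. if k \<in> B then qbit i k = f k \<and> qbit a k = f' k else qbit i k = qbit a k)
     \<longleftrightarrow> agree_outside B n i a \<and> f = assignment_of n B i \<and> f' = assignment_of n B a"
    unfolding eq_assignment_of_iff[OF f] eq_assignment_of_iff[OF f'] agree_outside_def by auto
  finally show ?thesis .
qed

lemma index_mult_mult_square:
  assumes A: "A \<in> carrier_mat N N" and R: "R \<in> carrier_mat N N" and C: "C \<in> carrier_mat N N"
    and i: "i < N" and j: "j < N"
  shows "(A * R * C) $$ (i, j) = (\<Sum>a<N. \<Sum>b<N. A $$ (i, a) * R $$ (a, b) * C $$ (b, j))"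
proof -
  have "(A * R * C) $$ (i, j) = (\<Sum>b<N. (A * R) $$ (i, b) * C $$ (b, j))"
    using assms by (intro index_mult_square) auto
  also have "\<dots> = (\<Sum>b<N. \<Sum>a<N. A $$ (i, a) * R $$ (a, b) * C $$ (b, j))"
    using A R i by (intro sum.cong refl) (simp add: index_mult_square[OF A R i] sum_distrib_right del: index_mult_mat)
  also have "\<dots> = (\<Sum>a<N. \<Sum>b<N. A $$ (i, a) * R $$ (a, b) * C $$ (b, j))"
    by (rule sum.swap)
  finally show ?thesis .
qed

lemma sum_pairs_filter:
  fixes N :: nat and h :: "nat \<Rightarrow> nat \<Rightarrow> 'a::semiring_1"
  shows "(\<Sum>(a, b)\<in>{(a, b). a < N \<and> b < N \<and> P a b}. h a b) = (\<Sum>a<N. \<Sum>b<N. of_bool (P a b) * h a b)"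
proof -
  have "(\<Sum>(a, b)\<in>{(a, b). a < N \<and> b < N \<and> P a b}. h a b)
      = (\<Sum>x\<in>{x \<in> {..<N} \<times> {..<N}. case_prod P x}. case_prod h x)"
    by (rule sum.cong) auto
  also have "\<dots> = (\<Sum>x\<in>{..<N} \<times> {..<N}. if case_prod P x then case_prod h x else 0)"
    by (rule sum.inter_filter) simp
  also have "\<dots> = (\<Sum>(a, b)\<in>{..<N} \<times> {..<N}. of_bool (P a b) * h a b)"
    by (rule sum.cong) auto
  also have "\<dots> = (\<Sum>a<N. \<Sum>b<N. of_bool (P a b) * h a b)"
    by (rule sum.cartesian_product[symmetric])
  finally show ?thesis .
qed

definition unit_quadruples :: "nat \<Rightarrow> nat set \<Rightarrow> ((nat \<Rightarrow> nat) \<times> (nat \<Rightarrow> nat) \<times> (nat \<Rightarrow> nat) \<times> (nat \<Rightarrow> nat)) set" where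
  "unit_quadruples n B = assignments n B \<times> assignments n B \<times> assignments n B \<times> assignments n B"

definition superop_term :: "nat \<Rightarrow> nat set \<Rightarrow> (nat \<Rightarrow> nat \<Rightarrow> nat \<Rightarrow> nat \<Rightarrow> complex) \<Rightarrow> complex mat \<Rightarrow>
    (nat \<Rightarrow> nat) \<times> (nat \<Rightarrow> nat) \<times> (nat \<Rightarrow> nat) \<times> (nat \<Rightarrow> nat) \<Rightarrow> complex mat" where
  "superop_term n B T \<rho> = (\<lambda>(f, f', g, g').
     T (assignment_index n B f) (assignment_index n B g) (assignment_index n B f') (assignment_index n B g')
       \<cdot>\<^sub>m (B_unit n B f f' * \<rho> * B_unit n B g' g))"

lemma superop_term_index:
  assumes \<rho>: "\<rho> \<in> carrier_mat (2 ^ n) (2 ^ n)" and i: "i < 2 ^ n" and j: "j < 2 ^ n"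
  shows "superop_term n B T \<rho> (f, f', g, g') $$ (i, j) = (\<Sum>a<2 ^ n. \<Sum>b<2 ^ n.
      T (assignment_index n B f) (assignment_index n B g) (assignment_index n B f') (assignment_index n B g')
      * (B_unit n B f f' $$ (i, a) * \<rho> $$ (a, b) * B_unit n B g' g $$ (b, j)))"
  using \<rho> i j index_mult_mult_square[OF B_unit_carrier \<rho> B_unit_carrier i j]
  by (simp add: superop_term_def sum_distrib_left)

text \<open>Summed over all quadruples of assignments, only the one read off from the indices survives.\<close>
lemma sum_superop_term_entries:
  assumes i: "i < 2 ^ n" and j: "j < 2 ^ n" and a: "a < 2 ^ n" and b: "b < 2 ^ n"
  shows "(\<Sum>(f, f', g, g')\<in>unit_quadruples n B.
      T (assignment_index n B f) (assignment_index n B g) (assignment_index n B f') (assignment_index n B g')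
      * (B_unit n B f f' $$ (i, a) * \<rho> $$ (a, b) * B_unit n B g' g $$ (b, j)))
    = of_bool (agree_outside B n i a \<and> agree_outside B n j b) *
      (T (restrict_idx B n i) (restrict_idx B n j) (restrict_idx B n a) (restrict_idx B n b) * \<rho> $$ (a, b))"
proof -
  let ?t0 = "(assignment_of n B i, assignment_of n B a, assignment_of n B j, assignment_of n B b)"
  have "(\<Sum>(f, f', g, g')\<in>unit_quadruples n B.
      T (assignment_index n B f) (assignment_index n B g) (assignment_index n B f') (assignment_index n B g')
      * (B_unit n B f f' $$ (i, a) * \<rho> $$ (a, b) * B_unit n B g' g $$ (b, j)))
    = (\<Sum>t\<in>unit_quadruples n B. if t = ?t0 then of_bool (agree_outside B n i a \<and> agree_outside B n j b) *
      (T (restrict_idx B n i) (restrict_idx B n j) (restrict_idx B n a) (restrict_idx B n b) * \<rho> $$ (a, b)) else 0)"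
    using i j a b by (intro sum.cong refl)
      (auto simp: unit_quadruples_def B_unit_index assignment_index_of agree_outside_sym[of B n j b])
  then show ?thesis
    by (simp add: unit_quadruples_def finite_assignments assignment_of_in)
qed

lemma identity_outside_expansion:
  assumes "identity_outside n B E"
  obtains T where "\<And>\<rho>. \<rho> \<in> carrier_mat (2 ^ n) (2 ^ n) \<Longrightarrow>
    E \<rho> = mat_sum (2 ^ n) (unit_quadruples n B) (superop_term n B T \<rho>)"
proof -
  obtain T where T: "\<forall>\<rho> \<in> carrier_mat (2 ^ n) (2 ^ n). E \<rho> = mat (2 ^ n) (2 ^ n) (\<lambda>(i, j).
       \<Sum>(a, b) \<in> {(a, b). a < 2 ^ n \<and> b < 2 ^ n \<and> agree_outside B n i a \<and> agree_outside B n j b}.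
         T (restrict_idx B n i) (restrict_idx B n j) (restrict_idx B n a) (restrict_idx B n b) * \<rho> $$ (a, b))"
    using assms unfolding identity_outside_def by blast
  have "E \<rho> = mat_sum (2 ^ n) (unit_quadruples n B) (superop_term n B T \<rho>)"
    if \<rho>: "\<rho> \<in> carrier_mat (2 ^ n) (2 ^ n)" for \<rho>
  proof (rule eq_matI)
    fix i j assume "i < dim_row (mat_sum (2 ^ n) (unit_quadruples n B) (superop_term n B T \<rho>))"
      "j < dim_col (mat_sum (2 ^ n) (unit_quadruples n B) (superop_term n B T \<rho>))"
    then have i: "i < 2 ^ n" and j: "j < 2 ^ n" by auto
    have "E \<rho> $$ (i, j) = (\<Sum>a<2 ^ n. \<Sum>b<2 ^ n. of_bool (agree_outside B n i a \<and> agree_outside B n j b) *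
        (T (restrict_idx B n i) (restrict_idx B n j) (restrict_idx B n a) (restrict_idx B n b) * \<rho> $$ (a, b)))"
      using T \<rho> i j by (simp add: sum_pairs_filter)
    also have "\<dots> = (\<Sum>a<2 ^ n. \<Sum>b<2 ^ n. \<Sum>(f, f', g, g')\<in>unit_quadruples n B.
        T (assignment_index n B f) (assignment_index n B g) (assignment_index n B f') (assignment_index n B g')
        * (B_unit n B f f' $$ (i, a) * \<rho> $$ (a, b) * B_unit n B g' g $$ (b, j)))"
      using i j by (simp add: sum_superop_term_entries)
    also have "\<dots> = (\<Sum>(f, f', g, g')\<in>unit_quadruples n B. \<Sum>a<2 ^ n. \<Sum>b<2 ^ n.
        T (assignment_index n B f) (assignment_index n B g) (assignment_index n B f') (assignment_index n B g')
        * (B_unit n B f f' $$ (i, a) * \<rho> $$ (a, b) * B_unit n B g' g $$ (b, j)))"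
      by (subst sum.swap, subst (2) sum.swap) (simp add: case_prod_beta)
    also have "\<dots> = mat_sum (2 ^ n) (unit_quadruples n B) (superop_term n B T \<rho>) $$ (i, j)"
      using \<rho> i j unfolding mat_sum_index[OF i j]
      by (intro sum.cong refl) (simp add: superop_term_index split: prod.splits)
    finally show "E \<rho> $$ (i, j) = mat_sum (2 ^ n) (unit_quadruples n B) (superop_term n B T \<rho>) $$ (i, j)" .
  qed (use T \<rho> in auto)
  then show ?thesis using that by blast
qed

locale recoverable_code =
  fixes n r :: nat and S :: "nat \<Rightarrow> complex mat" and B :: "nat set"
  assumes generators: "stabilizer_generators n r S"
    and recoverable: "recoverable n r S B"
begin

lemma generator_pauli:
  "i < r \<Longrightarrow> \<exists>c p. c \<in> {1, -1, \<i>, -\<i>} \<and> (\<forall>k<n. p k < 4) \<and> S i = c \<cdot>\<^sub>m pauli_string n p"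
  using generators unfolding stabilizer_generators_def is_pauli_def pauli_on_def by blast

lemma generator_carrier: "i < r \<Longrightarrow> S i \<in> carrier_mat (2 ^ n) (2 ^ n)"
  using generator_pauli by fastforce

lemma generator_in_stab_group: "i < r \<Longrightarrow> S i \<in> stab_group n r S"
proof -
  assume i: "i < r"
  then have "S i * 1\<^sub>m (2 ^ n) \<in> gen_group (2 ^ n) (S ` {0..<r})"
    by (intro gen_group.mult gen_group.one) auto
  then show ?thesis
    using generator_carrier[OF i] unfolding stab_group_def by simp
qed

text \<open>A generator is a Pauli operator, so its square is \<open>\<pm>1\<close>; the sign \<open>-1\<close> is excluded since \<open>-I\<close> is not a stabilizer.\<close>
lemma generator_square:
  assumes i: "i < r"
  shows "S i * S i = 1\<^sub>m (2 ^ n)"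
proof -
  obtain c p where c: "c \<in> {1, -1, \<i>, -\<i>}" and p: "\<forall>k<n. p k < 4" and S: "S i = c \<cdot>\<^sub>m pauli_string n p"
    using generator_pauli[OF i] by blast
  have "S i * S i = (c * c) \<cdot>\<^sub>m 1\<^sub>m (2 ^ n)"
    unfolding S by (simp add: smult_mult_smult[of _ "2 ^ n" "2 ^ n" _ "2 ^ n"] pauli_string_square[OF p])
  moreover have "S i * S i \<in> stab_group n r S"
    using generator_in_stab_group[OF i] i unfolding stab_group_def by (auto intro: gen_group.mult)
  moreover have "(-1 :: complex) \<cdot>\<^sub>m 1\<^sub>m (2 ^ n) = - 1\<^sub>m (2 ^ n)"
    by (intro eq_matI) auto
  ultimately show ?thesis
    using c generators unfolding stabilizer_generators_def by auto
qed

sublocale commuting_involutions "2 ^ n" r S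
  using generator_carrier generator_square generators
  by unfold_locales (auto simp: stabilizer_generators_def)

definition B_labels :: "(nat \<Rightarrow> nat) set" where
  "B_labels = {p. (\<forall>k<n. p k < 4) \<and> (\<forall>k<n. k \<notin> B \<longrightarrow> p k = 0)}"

lemma B_labels_less_4: "p \<in> B_labels \<Longrightarrow> \<forall>k<n. p k < 4"
  by (simp add: B_labels_def)

lemma pauli_on_B_labels: "p \<in> B_labels \<Longrightarrow> pauli_on n B (pauli_string n p)"
  unfolding pauli_on_def B_labels_def by (intro exI[of _ 1] exI[of _ p]) simp

lemma pauli_on_B_labels_mult:
  assumes p: "p \<in> B_labels" and q: "q \<in> B_labels"
  shows "pauli_on n B (pauli_string n p * pauli_string n q)"
proof -
  let ?c = "\<Prod>k<n. pauli_prod_phase (p k) (q k)" and ?l = "\<lambda>k. pauli_prod_label (p k) (q k)"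
  have "?c \<in> {1, -1, \<i>, -\<i>}"
    by (rule prod_phase_unit) (use pauli_prod_phase_unit in blast)
  moreover have "\<forall>k<n. ?l k < 4" "\<forall>k<n. k \<notin> B \<longrightarrow> ?l k = 0"
    using p q by (auto simp: B_labels_def pauli_prod_label_less_4 pauli_prod_label_def)
  ultimately show ?thesis
    unfolding pauli_string_mult[OF B_labels_less_4[OF p] B_labels_less_4[OF q]] pauli_on_def
    by (intro exI[of _ ?c] exI[of _ ?l] conjI refl)
qed

definition comm_sign :: "(nat \<Rightarrow> nat) \<Rightarrow> nat \<Rightarrow> complex" where
  "comm_sign p i = (SOME e. e \<in> {1, -1} \<and> pauli_string n p * S i = e \<cdot>\<^sub>m (S i * pauli_string n p))"

lemma comm_sign:
  assumes p: "\<forall>k<n. p k < 4" and i: "i < r"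
  shows "comm_sign p i \<in> {1, -1}" and "pauli_string n p * S i = comm_sign p i \<cdot>\<^sub>m (S i * pauli_string n p)"
proof -
  obtain c s where s: "\<forall>k<n. s k < 4" and S: "S i = c \<cdot>\<^sub>m pauli_string n s"
    using generator_pauli[OF i] by blast
  let ?e = "\<Prod>k<n. pauli_comm_sign (p k) (s k)"
  have "pauli_string n p * S i = c \<cdot>\<^sub>m (pauli_string n p * pauli_string n s)"
    unfolding S by (simp add: mult_smult_distrib[of _ "2 ^ n" "2 ^ n" _ "2 ^ n"])
  also have "\<dots> = ?e \<cdot>\<^sub>m (S i * pauli_string n p)"
    unfolding S pauli_string_commute[OF p s]
    by (simp add: mult_smult_assoc_mat[of _ "2 ^ n" "2 ^ n" _ "2 ^ n"] smult_smult_mat mult.commute)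
  finally have "pauli_string n p * S i = ?e \<cdot>\<^sub>m (S i * pauli_string n p)" .
  moreover have "?e \<in> {1, -1}"
    by (rule prod_sign) (simp add: pauli_comm_sign_def)
  ultimately have "\<exists>e. e \<in> {1, -1} \<and> pauli_string n p * S i = e \<cdot>\<^sub>m (S i * pauli_string n p)"
    by blast
  from someI_ex[OF this] show "comm_sign p i \<in> {1, -1}"
    and "pauli_string n p * S i = comm_sign p i \<cdot>\<^sub>m (S i * pauli_string n p)"
    unfolding comm_sign_def by blast+
qed

abbreviation syndrome_proj :: "nat \<Rightarrow> complex mat" where
  "syndrome_proj x \<equiv> sign_proj (2 ^ n) S (syndrome_sign x) r"

abbreviation code_proj :: "complex mat" where
  "code_proj \<equiv> sign_proj (2 ^ n) S (\<lambda>_. 1) r"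

lemma proj_eq_syndrome_proj: "proj n r S x = syndrome_proj x"
  unfolding proj_def by (rule proj_upto_eq_sign_proj) (simp add: generator_carrier)

lemma proj_0_eq_code_proj: "proj n r S 0 = code_proj"
  unfolding proj_eq_syndrome_proj by (rule sign_proj_cong) (simp add: syndrome_sign_def qbit_def)

lemma stab_group_carrier: "T \<in> stab_group n r S \<Longrightarrow> T \<in> carrier_mat (2 ^ n) (2 ^ n)"
  unfolding stab_group_def by (rule gen_group_carrier)

lemma stab_group_absorbed:
  "T \<in> stab_group n r S \<Longrightarrow> T * code_proj = code_proj"
  "T \<in> stab_group n r S \<Longrightarrow> code_proj * T = code_proj"
  using gen_group_absorbed unfolding stab_group_def by blast+

definition has_syndrome :: "nat \<Rightarrow> (nat \<Rightarrow> nat) \<Rightarrow> bool" where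
  "has_syndrome x p \<longleftrightarrow> p \<in> B_labels \<and> (\<forall>i<r. comm_sign p i = syndrome_sign x i)"

text \<open>If no Pauli on \<open>B\<close> has syndrome \<open>x\<close>, the default \<open>I\<close> is irrelevant: then
  \<open>\<Pi>\<^sub>x P \<Pi>\<^sub>0 = 0\<close> for every Pauli \<open>P\<close> on \<open>B\<close>.\<close>
definition correction_label :: "nat \<Rightarrow> nat \<Rightarrow> nat" where
  "correction_label x = (if \<exists>p. has_syndrome x p then SOME p. has_syndrome x p else (\<lambda>_. 0))"

definition correction :: "nat \<Rightarrow> complex mat" where
  "correction x = pauli_string n (correction_label x)"

lemma correction_label_has_syndrome: "has_syndrome x p \<Longrightarrow> has_syndrome x (correction_label x)"
  unfolding correction_label_def using someI[of "has_syndrome x" p] by auto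

lemma correction_label_B_labels: "correction_label x \<in> B_labels"
proof (cases "\<exists>p. has_syndrome x p")
  case True
  then show ?thesis using correction_label_has_syndrome has_syndrome_def by blast
qed (simp add: correction_label_def B_labels_def)

lemma correction_carrier [simp]: "correction x \<in> carrier_mat (2 ^ n) (2 ^ n)"
  by (simp add: correction_def)

lemma correction_dim [simp]: "dim_row (correction x) = 2 ^ n" "dim_col (correction x) = 2 ^ n"
  by (simp_all add: correction_def)

lemma pauli_on_correction: "pauli_on n B (correction x)"
  unfolding correction_def by (rule pauli_on_B_labels[OF correction_label_B_labels])

lemma correction_square: "correction x * correction x = 1\<^sub>m (2 ^ n)"
  unfolding correction_def by (rule pauli_string_square[OF B_labels_less_4[OF correction_label_B_labels]])

lemma same_syndrome_product_stabilizer: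
  assumes p: "p \<in> B_labels" and q: "q \<in> B_labels" and same: "\<forall>i<r. comm_sign p i = comm_sign q i"
  shows "\<exists>c. \<exists>T \<in> stab_group n r S. pauli_string n p * pauli_string n q = c \<cdot>\<^sub>m T"
proof -
  let ?P = "pauli_string n p" and ?Q = "pauli_string n q"
  have commutes: "?P * ?Q * S i = S i * (?P * ?Q)" if i: "i < r" for i
  proof -
    let ?e = "comm_sign q i"
    have "?P * ?Q * S i = ?P * (?e \<cdot>\<^sub>m (S i * ?Q))"
      using i comm_sign(2)[OF B_labels_less_4[OF q] i] by (simp add: assoc_N)
    also have "\<dots> = ?e \<cdot>\<^sub>m ((?P * S i) * ?Q)"
      using i by (simp add: mult_smult_distrib[of _ "2 ^ n" "2 ^ n" _ "2 ^ n"] assoc_N)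
    also have "?P * S i = ?e \<cdot>\<^sub>m (S i * ?P)"
      using i same comm_sign(2)[OF B_labels_less_4[OF p] i] by simp
    also have "?e \<cdot>\<^sub>m ((?e \<cdot>\<^sub>m (S i * ?P)) * ?Q) = (?e * ?e) \<cdot>\<^sub>m (S i * (?P * ?Q))"
      using i by (simp add: mult_smult_assoc_mat[of _ "2 ^ n" "2 ^ n" _ "2 ^ n"] smult_smult_mat assoc_N)
    finally show ?thesis
      using comm_sign(1)[OF B_labels_less_4[OF q] i] by auto
  qed
  then show ?thesis
    using recoverable pauli_on_B_labels_mult[OF p q] unfolding recoverable_def by blast
qed

lemma syndrome_proj_pauli_string:
  assumes p: "\<forall>k<n. p k < 4"
  shows "syndrome_proj x * pauli_string n p = pauli_string n p * sign_proj (2 ^ n) S (\<lambda>i. comm_sign p i * syndrome_sign x i) r"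
    and "pauli_string n p * syndrome_proj x = sign_proj (2 ^ n) S (\<lambda>i. comm_sign p i * syndrome_sign x i) r * pauli_string n p"
proof -
  have sign_sq: "comm_sign p i * (comm_sign p i * syndrome_sign x i) = syndrome_sign x i" if "i < r" for i
    using comm_sign(1)[OF p that] by auto
  have "pauli_string n p * sign_proj (2 ^ n) S (\<lambda>i. comm_sign p i * syndrome_sign x i) r
      = sign_proj (2 ^ n) S (\<lambda>i. comm_sign p i * (comm_sign p i * syndrome_sign x i)) r * pauli_string n p"
    using comm_sign(2)[OF p] by (intro sign_proj_pass) auto
  also have "\<dots> = syndrome_proj x * pauli_string n p"
    using sign_sq sign_proj_cong[of r "\<lambda>i. comm_sign p i * (comm_sign p i * syndrome_sign x i)" "syndrome_sign x"]
    by simp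
  finally show "syndrome_proj x * pauli_string n p = pauli_string n p * sign_proj (2 ^ n) S (\<lambda>i. comm_sign p i * syndrome_sign x i) r"
    by simp
  show "pauli_string n p * syndrome_proj x = sign_proj (2 ^ n) S (\<lambda>i. comm_sign p i * syndrome_sign x i) r * pauli_string n p"
    using comm_sign(2)[OF p] by (intro sign_proj_pass) auto
qed

lemma sign_proj_code_proj:
  assumes "\<forall>i<r. g i \<in> {1, -1}"
  shows "sign_proj (2 ^ n) S g r * code_proj = (if \<forall>i<r. g i = 1 then code_proj else 0\<^sub>m (2 ^ n) (2 ^ n))"
    and "code_proj * sign_proj (2 ^ n) S g r = (if \<forall>i<r. g i = 1 then code_proj else 0\<^sub>m (2 ^ n) (2 ^ n))"
  using sign_proj_mult[of r g "\<lambda>_. 1"] sign_proj_mult[of r "\<lambda>_. 1" g] assms sign_proj_cong[of r g "\<lambda>_. 1"]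
  by (auto simp: eq_commute[of 1])

lemma has_syndrome_iff:
  assumes "p \<in> B_labels"
  shows "has_syndrome x p \<longleftrightarrow> (\<forall>i<r. comm_sign p i * syndrome_sign x i = 1)"
  using assms comm_sign(1)[OF B_labels_less_4[OF assms]] syndrome_sign_sign[of x]
  unfolding has_syndrome_def by (metis (no_types, lifting) insertE singletonD mult_1 mult_minus1
      minus_mult_minus equation_minus_iff one_neq_neg_one)

lemma pauli_string_code_proj:
  assumes "has_syndrome x p"
  shows "\<exists>c. pauli_string n p * code_proj = c \<cdot>\<^sub>m (correction x * code_proj)"
    and "\<exists>c. code_proj * pauli_string n p = c \<cdot>\<^sub>m (code_proj * correction x)"
proof -
  let ?p0 = "correction_label x"
  have p: "p \<in> B_labels" and p0: "?p0 \<in> B_labels"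
    and same: "\<forall>i<r. comm_sign ?p0 i = comm_sign p i"
    using assms correction_label_has_syndrome[OF assms] unfolding has_syndrome_def by auto
  have sq: "pauli_string n ?p0 * pauli_string n ?p0 = 1\<^sub>m (2 ^ n)"
    using pauli_string_square[OF B_labels_less_4[OF p0]] .
  obtain c T where T: "T \<in> stab_group n r S" and cT: "pauli_string n ?p0 * pauli_string n p = c \<cdot>\<^sub>m T"
    using same_syndrome_product_stabilizer[OF p0 p same] by blast
  have "pauli_string n p * code_proj = pauli_string n ?p0 * ((pauli_string n ?p0 * pauli_string n p) * code_proj)"
    using sq by (simp add: assoc_N[symmetric])
  also have "\<dots> = c \<cdot>\<^sub>m (correction x * code_proj)"
    unfolding cT correction_def using stab_group_carrier[OF T] stab_group_absorbed(1)[OF T]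
    by (simp add: mult_smult_assoc_mat[of _ "2 ^ n" "2 ^ n" _ "2 ^ n"] mult_smult_distrib[of _ "2 ^ n" "2 ^ n" _ "2 ^ n"])
  finally show "\<exists>c. pauli_string n p * code_proj = c \<cdot>\<^sub>m (correction x * code_proj)" ..
  obtain c' T' where T': "T' \<in> stab_group n r S" and cT': "pauli_string n p * pauli_string n ?p0 = c' \<cdot>\<^sub>m T'"
    using same_syndrome_product_stabilizer[OF p p0] same by auto
  have "code_proj * pauli_string n p = (code_proj * (pauli_string n p * pauli_string n ?p0)) * pauli_string n ?p0"
    using sq by (simp add: assoc_N)
  also have "\<dots> = c' \<cdot>\<^sub>m (code_proj * correction x)"
    unfolding cT' correction_def using stab_group_carrier[OF T'] stab_group_absorbed(2)[OF T']
    by (simp add: mult_smult_assoc_mat[of _ "2 ^ n" "2 ^ n" _ "2 ^ n"] mult_smult_distrib[of _ "2 ^ n" "2 ^ n" _ "2 ^ n"])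
  finally show "\<exists>c. code_proj * pauli_string n p = c \<cdot>\<^sub>m (code_proj * correction x)" ..
qed

lemma comm_syndrome_sign: "p \<in> B_labels \<Longrightarrow> \<forall>i<r. comm_sign p i * syndrome_sign x i \<in> {1, -1}"
  using comm_sign(1)[OF B_labels_less_4] syndrome_sign_sign by fastforce

lemma syndrome_proj_pauli_code_proj:
  assumes p: "p \<in> B_labels"
  shows "\<exists>\<mu>. syndrome_proj x * pauli_string n p * code_proj = \<mu> \<cdot>\<^sub>m (correction x * code_proj)"
proof -
  have "syndrome_proj x * pauli_string n p * code_proj =
      pauli_string n p * (sign_proj (2 ^ n) S (\<lambda>i. comm_sign p i * syndrome_sign x i) r * code_proj)"
    unfolding syndrome_proj_pauli_string(1)[OF B_labels_less_4[OF p]] by (simp add: assoc_N)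
  also have "\<dots> = (if has_syndrome x p then pauli_string n p * code_proj else 0\<^sub>m (2 ^ n) (2 ^ n))"
    unfolding sign_proj_code_proj(1)[OF comm_syndrome_sign[OF p]] has_syndrome_iff[OF p] by auto
  finally show ?thesis
    using pauli_string_code_proj(1)[of x p] by (cases "has_syndrome x p") (auto intro!: exI[of _ 0] eq_matI)
qed

lemma code_proj_pauli_syndrome_proj:
  assumes p: "p \<in> B_labels"
  shows "\<exists>\<mu>. code_proj * pauli_string n p * syndrome_proj x = \<mu> \<cdot>\<^sub>m (code_proj * correction x)"
proof -
  have "code_proj * pauli_string n p * syndrome_proj x =
      (code_proj * sign_proj (2 ^ n) S (\<lambda>i. comm_sign p i * syndrome_sign x i) r) * pauli_string n p"
    by (simp add: assoc_N syndrome_proj_pauli_string(2)[OF B_labels_less_4[OF p]])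
  also have "\<dots> = (if has_syndrome x p then code_proj * pauli_string n p else 0\<^sub>m (2 ^ n) (2 ^ n))"
    unfolding sign_proj_code_proj(2)[OF comm_syndrome_sign[OF p]] has_syndrome_iff[OF p] by auto
  finally show ?thesis
    using pauli_string_code_proj(2)[of x p] by (cases "has_syndrome x p") (auto intro!: exI[of _ 0] eq_matI)
qed

lemma syndrome_proj_sandwich:
  assumes \<rho>: "\<rho> \<in> carrier_mat (2 ^ n) (2 ^ n)" and code: "code_proj * \<rho> * code_proj = \<rho>"
    and p: "p \<in> B_labels" and q: "q \<in> B_labels"
  shows "\<exists>\<mu>. syndrome_proj x * (pauli_string n p * \<rho> * pauli_string n q) * syndrome_proj x
      = \<mu> \<cdot>\<^sub>m (correction x * \<rho> * correction x)"
proof -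
  obtain a where a: "syndrome_proj x * pauli_string n p * code_proj = a \<cdot>\<^sub>m (correction x * code_proj)"
    using syndrome_proj_pauli_code_proj[OF p] by blast
  obtain b where b: "code_proj * pauli_string n q * syndrome_proj x = b \<cdot>\<^sub>m (code_proj * correction x)"
    using code_proj_pauli_syndrome_proj[OF q] by blast
  have "syndrome_proj x * (pauli_string n p * \<rho> * pauli_string n q) * syndrome_proj x
      = (syndrome_proj x * pauli_string n p * code_proj) * \<rho> * (code_proj * pauli_string n q * syndrome_proj x)"
    using \<rho> by (subst (1) code[symmetric]) (simp add: assoc_N)
  also have "\<dots> = (a * b) \<cdot>\<^sub>m (correction x * (code_proj * \<rho> * code_proj) * correction x)"
    unfolding a b using \<rho>
    by (simp add: mult_smult_assoc_mat[of _ "2 ^ n" "2 ^ n" _ "2 ^ n"] mult_smult_distrib[of _ "2 ^ n" "2 ^ n" _ "2 ^ n"]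
        smult_smult_mat assoc_N mult.commute)
  finally show ?thesis
    unfolding code by blast
qed

definition collapses :: "nat \<Rightarrow> complex mat \<Rightarrow> complex mat \<Rightarrow> bool" where
  "collapses x \<rho> M \<longleftrightarrow> M \<in> carrier_mat (2 ^ n) (2 ^ n) \<and>
     (\<exists>c. syndrome_proj x * M * syndrome_proj x = c \<cdot>\<^sub>m (correction x * \<rho> * correction x))"

lemma collapses_smult:
  assumes "collapses x \<rho> M"
  shows "collapses x \<rho> (a \<cdot>\<^sub>m M)"
proof -
  obtain c where M: "M \<in> carrier_mat (2 ^ n) (2 ^ n)"
    and c: "syndrome_proj x * M * syndrome_proj x = c \<cdot>\<^sub>m (correction x * \<rho> * correction x)"
    using assms unfolding collapses_def by blast
  have "syndrome_proj x * (a \<cdot>\<^sub>m M) * syndrome_proj x = (a * c) \<cdot>\<^sub>m (correction x * \<rho> * correction x)"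
    using M by (simp add: mult_smult_distrib[of _ "2 ^ n" "2 ^ n" _ "2 ^ n"]
        mult_smult_assoc_mat[of _ "2 ^ n" "2 ^ n" _ "2 ^ n"] c smult_smult_mat)
  then show ?thesis using M unfolding collapses_def by auto
qed

lemma collapses_mat_sum:
  assumes \<rho>: "\<rho> \<in> carrier_mat (2 ^ n) (2 ^ n)" and h: "\<forall>t\<in>F. collapses x \<rho> (h t)"
  shows "collapses x \<rho> (mat_sum (2 ^ n) F h)"
proof -
  have "\<forall>t\<in>F. \<exists>c. syndrome_proj x * h t * syndrome_proj x = c \<cdot>\<^sub>m (correction x * \<rho> * correction x)"
    using h unfolding collapses_def by blast
  from bchoice[OF this] obtain c
    where c: "\<forall>t\<in>F. syndrome_proj x * h t * syndrome_proj x = c t \<cdot>\<^sub>m (correction x * \<rho> * correction x)" ..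
  have carrier: "\<forall>t\<in>F. h t \<in> carrier_mat (2 ^ n) (2 ^ n)"
    using h unfolding collapses_def by blast
  have "syndrome_proj x * mat_sum (2 ^ n) F h * syndrome_proj x
      = mat_sum (2 ^ n) F (\<lambda>t. syndrome_proj x * h t) * syndrome_proj x"
    by (subst mult_mat_sum) (use carrier in auto)
  also have "\<dots> = mat_sum (2 ^ n) F (\<lambda>t. syndrome_proj x * h t * syndrome_proj x)"
    by (subst mat_sum_mult) (use carrier in auto)
  also have "\<dots> = (\<Sum>t\<in>F. c t) \<cdot>\<^sub>m (correction x * \<rho> * correction x)"
    using c \<rho> by (intro mat_sum_smult) auto
  finally show ?thesis unfolding collapses_def by auto
qed

lemma B_pauli_labels_B_labels: "p \<in> B_pauli_labels n B \<Longrightarrow> p \<in> B_labels"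
  unfolding B_pauli_labels_def B_labels_def by (auto simp: PiE_iff split: if_splits)

lemma collapses_B_unit_sandwich:
  assumes \<rho>: "\<rho> \<in> carrier_mat (2 ^ n) (2 ^ n)" and code: "code_proj * \<rho> * code_proj = \<rho>"
  shows "collapses x \<rho> (B_unit n B f f' * \<rho> * B_unit n B g' g)"
proof -
  have pauli_sandwich: "collapses x \<rho> (pauli_string n p * \<rho> * pauli_string n q)"
    if "p \<in> B_pauli_labels n B" "q \<in> B_pauli_labels n B" for p q
  proof -
    have "p \<in> B_labels" "q \<in> B_labels"
      using that by (simp_all add: B_pauli_labels_B_labels)
    then show ?thesis
      unfolding collapses_def using syndrome_proj_sandwich[OF \<rho> code] \<rho> by simp
  qed
  have "B_unit n B f f' * \<rho> * B_unit n B g' g = mat_sum (2 ^ n) (B_pauli_labels n B) (\<lambda>q.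
      unit_coeff n B g' g q \<cdot>\<^sub>m mat_sum (2 ^ n) (B_pauli_labels n B) (\<lambda>p.
        unit_coeff n B f f' p \<cdot>\<^sub>m (pauli_string n p * \<rho> * pauli_string n q)))"
    unfolding B_unit_def using \<rho>
    by (simp add: mult_mat_sum mat_sum_mult mult_smult_distrib[of _ "2 ^ n" "2 ^ n" _ "2 ^ n"]
        mult_smult_assoc_mat[of _ "2 ^ n" "2 ^ n" _ "2 ^ n"])
  then show ?thesis
    using pauli_sandwich \<rho> by (simp add: collapses_mat_sum collapses_smult)
qed

lemma collapses_identity_outside:
  assumes E: "identity_outside n B E"
    and \<rho>: "\<rho> \<in> carrier_mat (2 ^ n) (2 ^ n)" and code: "code_proj * \<rho> * code_proj = \<rho>"
  shows "collapses x \<rho> (E \<rho>)"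
proof -
  obtain T where "E \<rho> = mat_sum (2 ^ n) (unit_quadruples n B) (superop_term n B T \<rho>)"
    using identity_outside_expansion[OF E] \<rho> by blast
  moreover have "collapses x \<rho> (superop_term n B T \<rho> t)" for t
    unfolding superop_term_def using collapses_B_unit_sandwich[OF \<rho> code]
    by (cases t) (simp add: collapses_smult)
  ultimately show ?thesis
    using \<rho> by (simp add: collapses_mat_sum)
qed

lemma sum_collapse_coeffs:
  assumes M: "M \<in> carrier_mat (2 ^ n) (2 ^ n)" and \<rho>: "\<rho> \<in> carrier_mat (2 ^ n) (2 ^ n)" and tr: "mtrace \<rho> = 1"
    and \<alpha>: "\<And>x. syndrome_proj x * M * syndrome_proj x = \<alpha> x \<cdot>\<^sub>m (correction x * \<rho> * correction x)"
  shows "(\<Sum>x<2 ^ r. \<alpha> x) = mtrace M"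
proof -
  have coeff: "\<alpha> x = mtrace (M * syndrome_proj x)" for x
  proof -
    have "mtrace (correction x * \<rho> * correction x) = mtrace (correction x * (correction x * \<rho>))"
      using \<rho> by (intro mtrace_mult_commute[of _ "2 ^ n"]) auto
    then have "mtrace (correction x * \<rho> * correction x) = 1"
      using \<rho> tr correction_square[of x] by (simp add: assoc_N[symmetric])
    then have "\<alpha> x = mtrace (\<alpha> x \<cdot>\<^sub>m (correction x * \<rho> * correction x))"
      using \<rho> by (simp add: mtrace_smult[of _ "2 ^ n"])
    also have "\<dots> = mtrace (syndrome_proj x * (M * syndrome_proj x))"
      using M by (simp add: \<alpha>[symmetric] assoc_N)
    also have "\<dots> = mtrace (M * (syndrome_proj x * syndrome_proj x))"
      using M by (subst mtrace_mult_commute[of _ "2 ^ n"]) (simp_all add: assoc_N)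
    finally show ?thesis
      using sign_proj_mult[of r "syndrome_sign x" "syndrome_sign x"] syndrome_sign_sign by simp
  qed
  have "(\<Sum>x<2 ^ r. \<alpha> x) = mtrace (mat_sum (2 ^ n) {..<2 ^ r} (\<lambda>x. M * syndrome_proj x))"
    using M by (simp add: coeff mtrace_mat_sum)
  also have "\<dots> = mtrace M"
    using M sum_sign_proj[of r] by (simp add: mult_mat_sum[symmetric])
  finally show ?thesis .
qed

end

theorem lemma2p24:
  fixes n r :: nat and S :: "nat \<Rightarrow> complex mat" and B :: "nat set"
    and E :: "complex mat \<Rightarrow> complex mat" and \<rho> :: "complex mat"
  assumes "stabilizer_generators n r S"
    and "recoverable n r S B"
    and "identity_outside n B E"
    and "density_op n \<rho>"
    and "proj n r S 0 * \<rho> * proj n r S 0 = \<rho>"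
  shows "\<exists>\<alpha> :: nat \<Rightarrow> complex. \<exists>Ex :: nat \<Rightarrow> complex mat.
           (\<forall>x < 2 ^ r. pauli_on n B (Ex x)) \<and>
           syndrome_meas n r S (E \<rho>) = blockdiag r (2 ^ n) (\<lambda>x. \<alpha> x \<cdot>\<^sub>m (Ex x * \<rho> * Ex x)) \<and>
           (trace_preserving n E \<longrightarrow> (\<Sum>x < 2 ^ r. \<alpha> x) = 1)"
proof -
  interpret recoverable_code n r S B
    using assms(1,2) by unfold_locales
  have \<rho>: "\<rho> \<in> carrier_mat (2 ^ n) (2 ^ n)" and tr: "mtrace \<rho> = 1"
    using assms(4) unfolding density_op_def by auto
  have code: "code_proj * \<rho> * code_proj = \<rho>"
    using assms(5) unfolding proj_0_eq_code_proj .
  have collapses: "collapses x \<rho> (E \<rho>)" for x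
    using collapses_identity_outside[OF assms(3) \<rho> code] .
  then have E\<rho>: "E \<rho> \<in> carrier_mat (2 ^ n) (2 ^ n)"
    unfolding collapses_def by blast
  from collapses obtain \<alpha>
    where \<alpha>: "\<And>x. syndrome_proj x * E \<rho> * syndrome_proj x = \<alpha> x \<cdot>\<^sub>m (correction x * \<rho> * correction x)"
    unfolding collapses_def by metis
  show ?thesis
  proof (intro exI[of _ \<alpha>] exI[of _ correction] conjI allI impI)
    show "pauli_on n B (correction x)" for x
      by (rule pauli_on_correction)
    show "syndrome_meas n r S (E \<rho>) = blockdiag r (2 ^ n) (\<lambda>x. \<alpha> x \<cdot>\<^sub>m (correction x * \<rho> * correction x))"
      unfolding syndrome_meas_def proj_eq_syndrome_proj \<alpha> ..
    assume "trace_preserving n E"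
    then show "(\<Sum>x<2 ^ r. \<alpha> x) = 1"
      using sum_collapse_coeffs[OF E\<rho> \<rho> tr \<alpha>] \<rho> tr unfolding trace_preserving_def by simp
  qed
qed

end
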